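(* Let $d$ be a positive integer, let $z\in\mathbb{S}^d\subset\mathbb{R}^{d+1}$, and identify $\mathbb{S}^{d-1}$ with $\mathbb{S}^d\cap z^\perp$ (the unit sphere of the $d$-dimensional subspace $z^\perp$). Define $f:\mathbb{S}^{d-1}\to\mathbb{S}^d$ by $$f(x)=\sqrt{\tfrac{d}{d+1}}\,x+\tfrac{1}{\sqrt{d+1}}\,z,$$ and for a Borel probability measure $\mu$ on $\mathbb{S}^{d-1}$ let $\mu_l=f_*\mu$ be its pushforward. Then $\mu$ is balanced and isotropic on $\mathbb{S}^{d-1}$ if and only if $\mu_l$ is isotropic on $\mathbb{S}^d$.
   Context: A Borel probability measure $\nu$ on the unit sphere $\mathbb{S}^{n-1}$ of an $n$-dimensional Euclidean space is isotropic if $\int\langle x,y\rangle^2\,d\nu(x)=\frac1n$ for every unit vector $y$ in that space, and balanced if $\int x\,d\nu(x)=0$. *)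

theory Defs
  imports "HOL-Probability.Probability"
begin

definition sphere_prob :: "'a::euclidean_space set \<Rightarrow> 'a measure \<Rightarrow> bool" where
  "sphere_prob V \<nu> \<longleftrightarrow> prob_space \<nu> \<and> sets \<nu> = sets (restrict_space borel (sphere 0 1 \<inter> V))"

definition isotropic :: "'a::euclidean_space set \<Rightarrow> 'a measure \<Rightarrow> bool" where
  "isotropic V \<nu> \<longleftrightarrow> (\<forall>y\<in>V. norm y = 1 \<longrightarrow> (\<integral>x. (x \<bullet> y)\<^sup>2 \<partial>\<nu>) = 1 / real (dim V))"

definition balanced :: "'a::euclidean_space measure \<Rightarrow> bool" where
  "balanced \<nu> \<longleftrightarrow> (\<integral>x. x \<partial>\<nu>) = 0"

end

theory Submission
  imports Defs
begin

text \<open>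
  Write S y for the second moment of \<mu> in direction y and m for its barycentre. Both \<mu> and m
  live in the hyperplane H orthogonal to z, so S (y + t z) = S y. With a^2 = (N - 1) / N and
  b^2 = 1 / N, the lifted measure has second moment a^2 S y + 2 a b (z \<bullet> y) (m \<bullet> y) + b^2 (z \<bullet> y)^2,
  and by homogeneity its isotropy means that this equals |y|^2 / N for all y. If m = 0 and
  S u = |u|^2 / (N - 1) on H, splitting y = u + t z with u \<in> H gives the identity. Conversely, the
  identity at u \<in> H gives isotropy on H, and comparing it at m and at m + z forces a b |m|^2 = 0.
\<close>

lemma isotropic_iff_integral_inner_square:
  fixes V :: "'a::euclidean_space set"
  assumes "subspace V"
  shows "isotropic V \<nu> \<longleftrightarrow> (\<forall>y\<in>V. (\<integral>x. (x \<bullet> y)\<^sup>2 \<partial>\<nu>) = (y \<bullet> y) / real (dim V))"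
proof
  assume iso: "isotropic V \<nu>"
  show "\<forall>y\<in>V. (\<integral>x. (x \<bullet> y)\<^sup>2 \<partial>\<nu>) = (y \<bullet> y) / real (dim V)"
  proof (intro ballI)
    fix y assume "y \<in> V"
    show "(\<integral>x. (x \<bullet> y)\<^sup>2 \<partial>\<nu>) = (y \<bullet> y) / real (dim V)"
    proof (cases "y = 0")
      case False
      define u where "u = y /\<^sub>R norm y"
      have "u \<in> V" "norm u = 1"
        using \<open>y \<in> V\<close> False assms by (auto simp: u_def subspace_scale)
      have "(x \<bullet> y)\<^sup>2 = (norm y)\<^sup>2 * (x \<bullet> u)\<^sup>2" for x
        using False by (simp add: u_def power_mult_distrib power_inverse)
      then have "(\<integral>x. (x \<bullet> y)\<^sup>2 \<partial>\<nu>) = (\<integral>x. (norm y)\<^sup>2 * (x \<bullet> u)\<^sup>2 \<partial>\<nu>)"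
        by simp
      also have "\<dots> = (norm y)\<^sup>2 / real (dim V)"
        using iso \<open>u \<in> V\<close> \<open>norm u = 1\<close> by (simp add: isotropic_def)
      finally show ?thesis by (simp add: power2_norm_eq_inner)
    qed simp
  qed
qed (simp add: isotropic_def norm_eq_1)

lemma sphere_prob_space:
  assumes "sphere_prob V \<mu>"
  shows "space \<mu> = sphere 0 1 \<inter> V"
proof -
  have "sets \<mu> = sets (restrict_space borel (sphere 0 1 \<inter> V))"
    using assms by (simp add: sphere_prob_def)
  from sets_eq_imp_space_eq[OF this] show ?thesis by (simp add: space_restrict_space)
qed

lemma sphere_prob_borel_measurable:
  assumes "sphere_prob V \<mu>" and "g \<in> borel_measurable borel"
  shows "g \<in> borel_measurable \<mu>"
proof -
  have "sets \<mu> = sets (restrict_space borel (sphere 0 1 \<inter> V))"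
    using assms by (simp add: sphere_prob_def)
  with measurable_restrict_space1[OF assms(2)] show ?thesis
    using measurable_cong_sets by blast
qed

lemma sphere_prob_integrable_bounded:
  fixes g :: "'a::euclidean_space \<Rightarrow> 'b::{banach, second_countable_topology}"
  assumes \<mu>: "sphere_prob V \<mu>" and "g \<in> borel_measurable borel"
    and bound: "\<And>x. norm x = 1 \<Longrightarrow> norm (g x) \<le> B"
  shows "integrable \<mu> g"
proof -
  interpret prob_space \<mu> using \<mu> by (simp add: sphere_prob_def)
  show ?thesis
  proof (rule integrable_const_bound[where B=B])
    show "AE x in \<mu>. norm (g x) \<le> B"
      using bound sphere_prob_space[OF \<mu>] by (intro AE_I2) auto
    show "g \<in> borel_measurable \<mu>"
      using sphere_prob_borel_measurable[OF \<mu> assms(2)] .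
  qed
qed

lemma sphere_prob_integrable_inner:
  assumes "sphere_prob V \<mu>"
  shows "integrable \<mu> (\<lambda>x. x \<bullet> y)"
proof (rule sphere_prob_integrable_bounded[OF assms, where B="norm y"])
  show "norm (x \<bullet> y) \<le> norm y" if "norm x = 1" for x :: 'a
    using Cauchy_Schwarz_ineq2[of x y] that by simp
qed simp

lemma sphere_prob_integrable_inner_square:
  assumes "sphere_prob V \<mu>"
  shows "integrable \<mu> (\<lambda>x. (x \<bullet> y)\<^sup>2)"
proof (rule sphere_prob_integrable_bounded[OF assms, where B="(norm y)\<^sup>2"])
  fix x :: 'a assume "norm x = 1"
  then have "\<bar>x \<bullet> y\<bar> \<le> norm y" using Cauchy_Schwarz_ineq2[of x y] by simp
  then have "\<bar>x \<bullet> y\<bar>\<^sup>2 \<le> (norm y)\<^sup>2"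
    by (rule power_mono) simp
  then show "norm ((x \<bullet> y)\<^sup>2) \<le> (norm y)\<^sup>2"
    by simp
qed simp

lemma sphere_prob_integrable_id:
  assumes "sphere_prob V \<mu>"
  shows "integrable \<mu> (\<lambda>x. x)"
  by (rule sphere_prob_integrable_bounded[OF assms, where B=1]) auto

lemma barycentre_inner_normal:
  assumes "sphere_prob {x. x \<bullet> z = 0} \<mu>"
  shows "(\<integral>x. x \<partial>\<mu>) \<bullet> z = 0"
proof -
  have "(\<integral>x. x \<partial>\<mu>) \<bullet> z = (\<integral>x. x \<bullet> z \<partial>\<mu>)"
    using sphere_prob_integrable_id[OF assms] by simp
  also have "\<dots> = (\<integral>x. 0 \<partial>\<mu>)"
    by (rule Bochner_Integration.integral_cong) (simp_all add: sphere_prob_space[OF assms])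
  finally show ?thesis by simp
qed

lemma integral_inner_square_add_normal:
  assumes "sphere_prob {x. x \<bullet> z = 0} \<mu>"
  shows "(\<integral>x. (x \<bullet> (y + t *\<^sub>R z))\<^sup>2 \<partial>\<mu>) = (\<integral>x. (x \<bullet> y)\<^sup>2 \<partial>\<mu>)"
  by (rule Bochner_Integration.integral_cong) (simp_all add: sphere_prob_space[OF assms] inner_add_right)

lemma integral_inner_square_distr_lift:
  fixes z :: "'a::euclidean_space"
  assumes \<mu>: "sphere_prob {x. x \<bullet> z = 0} \<mu>" and z: "norm z = 1" and ab: "a\<^sup>2 + b\<^sup>2 = 1"
  shows "(\<integral>x. (x \<bullet> y)\<^sup>2 \<partial>distr \<mu> (restrict_space borel (sphere 0 1)) (\<lambda>x. a *\<^sub>R x + b *\<^sub>R z))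
    = a\<^sup>2 * (\<integral>x. (x \<bullet> y)\<^sup>2 \<partial>\<mu>) + 2 * a * b * (z \<bullet> y) * ((\<integral>x. x \<partial>\<mu>) \<bullet> y) + b\<^sup>2 * (z \<bullet> y)\<^sup>2"
proof -
  interpret prob_space \<mu> using \<mu> by (simp add: sphere_prob_def)
  let ?f = "\<lambda>x. a *\<^sub>R x + b *\<^sub>R z"
  have "?f x \<in> sphere 0 1" if "x \<in> space \<mu>" for x
  proof -
    have "norm x = 1" "x \<bullet> z = 0" using that sphere_prob_space[OF \<mu>] by auto
    then have "?f x \<bullet> ?f x = a\<^sup>2 + b\<^sup>2"
      using z by (simp add: inner_add_left inner_add_right inner_commute norm_eq_1 power2_eq_square)
    then show ?thesis using ab by (simp add: norm_eq_1)
  qed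
  then have "?f \<in> measurable \<mu> (restrict_space borel (sphere 0 1))"
    by (intro measurable_restrict_space2 sphere_prob_borel_measurable[OF \<mu>]) auto
  then have "(\<integral>x. (x \<bullet> y)\<^sup>2 \<partial>distr \<mu> (restrict_space borel (sphere 0 1)) ?f)
      = (\<integral>x. (?f x \<bullet> y)\<^sup>2 \<partial>\<mu>)"
    by (intro integral_distr measurable_restrict_space1) simp_all
  also have "\<dots> = (\<integral>x. a\<^sup>2 * (x \<bullet> y)\<^sup>2 + (2 * a * b * (z \<bullet> y)) * (x \<bullet> y) + b\<^sup>2 * (z \<bullet> y)\<^sup>2 \<partial>\<mu>)"
    by (simp add: inner_add_left power2_eq_square algebra_simps)
  also have "\<dots> = a\<^sup>2 * (\<integral>x. (x \<bullet> y)\<^sup>2 \<partial>\<mu>) + 2 * a * b * (z \<bullet> y) * (\<integral>x. x \<bullet> y \<partial>\<mu>) + b\<^sup>2 * (z \<bullet> y)\<^sup>2"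
    using sphere_prob_integrable_inner[OF \<mu>] sphere_prob_integrable_inner_square[OF \<mu>]
    by (simp add: prob_space)
  also have "(\<integral>x. x \<bullet> y \<partial>\<mu>) = (\<integral>x. x \<partial>\<mu>) \<bullet> y"
    using sphere_prob_integrable_id[OF \<mu>] by simp
  finally show ?thesis .
qed

lemma lifted_moment_if_balanced_isotropic:
  fixes z :: "'a::euclidean_space" and n c :: real
  assumes \<mu>: "sphere_prob {x. x \<bullet> z = 0} \<mu>" and z: "norm z = 1" and n: "n \<noteq> 0"
    and "balanced \<mu>" and iso: "\<And>u. u \<bullet> z = 0 \<Longrightarrow> (\<integral>x. (x \<bullet> u)\<^sup>2 \<partial>\<mu>) = (u \<bullet> u) / n"
  shows "n * (\<integral>x. (x \<bullet> y)\<^sup>2 \<partial>\<mu>) + c * (z \<bullet> y) * ((\<integral>x. x \<partial>\<mu>) \<bullet> y) + (z \<bullet> y)\<^sup>2 = y \<bullet> y"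
proof -
  define t where "t = z \<bullet> y"
  define u where "u = y - t *\<^sub>R z"
  have zz: "z \<bullet> z = 1"
    using z by (simp add: norm_eq_1)
  have uz: "u \<bullet> z = 0"
    using zz by (simp add: u_def t_def inner_diff_left inner_commute[of z y])
  have uu: "u \<bullet> u = y \<bullet> y - t\<^sup>2"
    using zz by (simp add: u_def t_def inner_diff_left inner_diff_right inner_commute power2_eq_square)
  have "(\<integral>x. (x \<bullet> y)\<^sup>2 \<partial>\<mu>) = (\<integral>x. (x \<bullet> (u + t *\<^sub>R z))\<^sup>2 \<partial>\<mu>)"
    by (simp add: u_def)
  also have "\<dots> = (u \<bullet> u) / n"
    using integral_inner_square_add_normal[OF \<mu>] iso[OF uz] by simp
  finally show ?thesis
    using \<open>balanced \<mu>\<close> n by (simp add: balanced_def uu t_def)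
qed

lemma balanced_isotropic_if_lifted_moment:
  fixes z :: "'a::euclidean_space" and n c :: real
  assumes \<mu>: "sphere_prob {x. x \<bullet> z = 0} \<mu>" and z: "norm z = 1" and n: "n \<noteq> 0" and c: "c \<noteq> 0"
    and lifted: "\<And>y. n * (\<integral>x. (x \<bullet> y)\<^sup>2 \<partial>\<mu>) + c * (z \<bullet> y) * ((\<integral>x. x \<partial>\<mu>) \<bullet> y) + (z \<bullet> y)\<^sup>2 = y \<bullet> y"
  shows "balanced \<mu> \<and> (\<forall>u. u \<bullet> z = 0 \<longrightarrow> (\<integral>x. (x \<bullet> u)\<^sup>2 \<partial>\<mu>) = (u \<bullet> u) / n)"
proof -
  let ?S = "\<lambda>y. \<integral>x. (x \<bullet> y)\<^sup>2 \<partial>\<mu>"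
  let ?m = "\<integral>x. x \<partial>\<mu>"
  have mz: "?m \<bullet> z = 0"
    using barycentre_inner_normal[OF \<mu>] .
  have iso: "?S u = (u \<bullet> u) / n" if "u \<bullet> z = 0" for u
  proof -
    have "n * ?S u = u \<bullet> u"
      using lifted[of u] that by (simp add: inner_commute[of z u])
    then show ?thesis
      using n by (simp add: field_simps)
  qed
  \<comment> \<open>At the barycentre m and at m + z the identity differs only in the cross term c (m \<bullet> m).\<close>
  have "n * ?S ?m = ?m \<bullet> ?m"
    using lifted[of ?m] mz by (simp add: inner_commute[of z ?m])
  moreover have "n * ?S (?m + z) + c * (?m \<bullet> ?m) + 1 = ?m \<bullet> ?m + 1"
    using lifted[of "?m + z"] mz z
    by (simp add: inner_add_left inner_add_right inner_commute norm_eq_1)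
  moreover have "?S (?m + z) = ?S ?m"
    using integral_inner_square_add_normal[OF \<mu>, of ?m 1] by simp
  ultimately have "c * (?m \<bullet> ?m) = 0"
    by simp
  then show ?thesis
    using c iso by (simp add: balanced_def)
qed

lemma balanced_isotropic_iff_lifted_moment:
  fixes z :: "'a::euclidean_space" and n c :: real
  assumes "sphere_prob {x. x \<bullet> z = 0} \<mu>" and "norm z = 1" and "n \<noteq> 0" and "c \<noteq> 0"
  shows "(balanced \<mu> \<and> (\<forall>u. u \<bullet> z = 0 \<longrightarrow> (\<integral>x. (x \<bullet> u)\<^sup>2 \<partial>\<mu>) = (u \<bullet> u) / n)) \<longleftrightarrow>
    (\<forall>y. n * (\<integral>x. (x \<bullet> y)\<^sup>2 \<partial>\<mu>) + c * (z \<bullet> y) * ((\<integral>x. x \<partial>\<mu>) \<bullet> y) + (z \<bullet> y)\<^sup>2 = y \<bullet> y)"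
  using lifted_moment_if_balanced_isotropic[OF assms(1-3)] balanced_isotropic_if_lifted_moment[OF assms]
  by blast

lemma isotropic_hyperplane_iff:
  fixes z :: "'a::euclidean_space"
  assumes "z \<noteq> 0"
  shows "isotropic {x. x \<bullet> z = 0} \<nu> \<longleftrightarrow>
    (\<forall>u. u \<bullet> z = 0 \<longrightarrow> (\<integral>x. (x \<bullet> u)\<^sup>2 \<partial>\<nu>) = (u \<bullet> u) / (real DIM('a) - 1))"
proof -
  have "dim {x::'a. z \<bullet> x = 0} = DIM('a) - 1"
    using assms by (rule dim_hyperplane)
  then have "real (dim {x::'a. x \<bullet> z = 0}) = real DIM('a) - 1"
    by (simp add: inner_commute of_nat_diff)
  then show ?thesis
    by (simp add: isotropic_iff_integral_inner_square subspace_hyperplane2)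
qed

lemma isotropic_distr_lift_iff:
  fixes z :: "'a::euclidean_space"
  assumes \<mu>: "sphere_prob {x. x \<bullet> z = 0} \<mu>" and z: "norm z = 1"
    and a2: "a\<^sup>2 = (real DIM('a) - 1) / real DIM('a)" and b2: "b\<^sup>2 = 1 / real DIM('a)"
  shows "isotropic UNIV (distr \<mu> (restrict_space borel (sphere 0 1)) (\<lambda>x. a *\<^sub>R x + b *\<^sub>R z)) \<longleftrightarrow>
    (\<forall>y. (real DIM('a) - 1) * (\<integral>x. (x \<bullet> y)\<^sup>2 \<partial>\<mu>)
      + (2 * a * b * real DIM('a)) * (z \<bullet> y) * ((\<integral>x. x \<partial>\<mu>) \<bullet> y) + (z \<bullet> y)\<^sup>2 = y \<bullet> y)"
proof -
  have ab: "a\<^sup>2 + b\<^sup>2 = 1"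
    by (simp add: a2 b2 field_simps)
  have "(\<integral>x. (x \<bullet> y)\<^sup>2 \<partial>distr \<mu> (restrict_space borel (sphere 0 1)) (\<lambda>x. a *\<^sub>R x + b *\<^sub>R z))
        = (y \<bullet> y) / real DIM('a)
    \<longleftrightarrow> (real DIM('a) - 1) * (\<integral>x. (x \<bullet> y)\<^sup>2 \<partial>\<mu>)
      + (2 * a * b * real DIM('a)) * (z \<bullet> y) * ((\<integral>x. x \<partial>\<mu>) \<bullet> y) + (z \<bullet> y)\<^sup>2 = y \<bullet> y" for y
    unfolding integral_inner_square_distr_lift[OF \<mu> z ab] a2 b2
    by (simp add: field_simps)
  then show ?thesis
    by (simp add: isotropic_iff_integral_inner_square)
qed

theorem lemma5p3:
  fixes z :: "'a::euclidean_space" and \<mu> :: "'a measure"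
  assumes "DIM('a) \<ge> 2"
    and "norm z = 1"
    and "sphere_prob {x. x \<bullet> z = 0} \<mu>"
  shows "(balanced \<mu> \<and> isotropic {x. x \<bullet> z = 0} \<mu>) \<longleftrightarrow>
    isotropic UNIV (distr \<mu> (restrict_space borel (sphere 0 1))
      (\<lambda>x. sqrt ((real DIM('a) - 1) / real DIM('a)) *\<^sub>R x + (1 / sqrt (real DIM('a))) *\<^sub>R z))"
proof -
  define a where "a = sqrt ((real DIM('a) - 1) / real DIM('a))"
  define b where "b = 1 / sqrt (real DIM('a))"
  have N: "real DIM('a) > 1"
    using assms(1) by simp
  then have n: "real DIM('a) - 1 \<noteq> 0"
    by simp
  have a2: "a\<^sup>2 = (real DIM('a) - 1) / real DIM('a)" and b2: "b\<^sup>2 = 1 / real DIM('a)"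
    using N by (simp_all add: a_def b_def power_divide)
  have c: "2 * a * b * real DIM('a) \<noteq> 0"
    using N by (simp add: a_def b_def)
  have "z \<noteq> 0"
    using assms(2) by auto
  have "isotropic UNIV (distr \<mu> (restrict_space borel (sphere 0 1)) (\<lambda>x. a *\<^sub>R x + b *\<^sub>R z)) \<longleftrightarrow>
      (balanced \<mu> \<and> isotropic {x. x \<bullet> z = 0} \<mu>)"
    by (simp only: isotropic_distr_lift_iff[OF assms(3,2) a2 b2] isotropic_hyperplane_iff[OF \<open>z \<noteq> 0\<close>]
        balanced_isotropic_iff_lifted_moment[OF assms(3,2) n c])
  then show ?thesis
    unfolding a_def b_def by blast
qed

end
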